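(* Let $d,T,\tau\ge1$ be integers and $\beta\in(0,1)$, and assume $L:=2T\tau/\beta\ge e$. Let $\sigma>0$ satisfy $$\sigma\sqrt{2\log L}\le\tfrac12 \qquad\text{and}\qquad 5\sigma^2 d\log L\le\frac{1}{\log L}.$$ Consider the random process in $\mathbb{R}^d$ given by $x^{(1)}=0$ and $$x^{(t+1)}=x^{(t)}+u^{(t)}+\eta^{(t)}\qquad (t=1,\dots,T-1),$$ where: - $u^{(t)}$ is a vector determined by $\eta^{(1)},\dots,\eta^{(t-1)}$ (that is, measurable with respect to the history up to step $t$) with $\|u^{(t)}\|_2\le1$ and $\langle x^{(t)},u^{(t)}\rangle\le0$; - $\eta^{(t)}\sim N(0,\sigma^2 I_d)$ is independent of $\eta^{(1)},\dots,\eta^{(t-1)}$. Then $$\Pr\left[\|x^{(t)}\|_2\le10\sqrt{t}\ \text{ for all } t\le T\right]\ge1-\frac{2\beta}{\tau}.$$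
   Context: $N(0,\sigma^2 I_d)$ is the centered Gaussian distribution on $\mathbb{R}^d$ with covariance $\sigma^2 I_d$. $\log$ is the natural logarithm. *)

theory Defs
  imports "HOL-Probability.Probability"
begin

definition iso_gauss_density :: "real \<Rightarrow> real ^ 'd \<Rightarrow> real" where
  "iso_gauss_density \<sigma> v = (\<Prod>i\<in>UNIV. normal_density 0 \<sigma> (v $ i))"

end

theory Submission
  imports Defs
begin

text \<open>Fix \<open>\<theta> = log L\<close>. Expanding the square and using \<open>\<langle>x\<^sub>t, u\<^sub>t\<rangle> \<le> 0\<close>, \<open>\<parallel>u\<^sub>t\<parallel> \<le> 1\<close> gives
  \<open>\<parallel>x\<^sub>t\<^sub>+\<^sub>1\<parallel>\<^sup>2 \<le> \<parallel>x\<^sub>t\<parallel>\<^sup>2 + 1 + \<parallel>\<eta>\<^sub>t\<parallel>\<^sup>2 + 2\<langle>x\<^sub>t + u\<^sub>t, \<eta>\<^sub>t\<rangle>\<close>. Fix a time \<open>t\<close> and put \<open>l = \<theta>/t\<close>.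
  While the walk stays in the region \<open>\<parallel>x\<^sub>q\<parallel> \<le> 10\<surd>q\<close>, the drift \<open>x\<^sub>r + u\<^sub>r\<close> has norm at most
  \<open>11\<surd>t\<close>, so by the Gaussian moment generating function the conditional expectation of
  \<open>exp (l (\<parallel>\<eta>\<^sub>r\<parallel>\<^sup>2 + 2\<langle>x\<^sub>r + u\<^sub>r, \<eta>\<^sub>r\<rangle>))\<close> is at most \<open>exp c\<close>, where the hypotheses on \<open>\<sigma>\<close> give
  \<open>t c \<le> 98\<theta>\<close>. Hence the product of the factors \<open>exp (l (\<parallel>\<eta>\<^sub>r\<parallel>\<^sup>2 + 2\<langle>x\<^sub>r + u\<^sub>r, \<eta>\<^sub>r\<rangle>) - c)\<close>, each
  replaced by 1 once the walk has left the region, has mean at most 1. If the walk leaves the region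
  for the first time at time \<open>t\<close>, then \<open>\<parallel>x\<^sub>t\<parallel>\<^sup>2 > 100 t\<close> forces the product up to \<open>t\<close> to be at least
  \<open>exp (99\<theta> - 98\<theta>) = L\<close>, so by Markov's inequality this happens with probability at most \<open>1/L\<close>.
  A union bound over \<open>t \<le> T\<close> bounds the failure probability by \<open>T/L = \<beta>/(2\<tau>)\<close>.\<close>

section \<open>Exponential moments of the isotropic Gaussian\<close>

lemma nn_integral_exp_quadratic_normal_density:
  fixes \<sigma> l b :: real
  defines "a \<equiv> 1 - 2 * l * \<sigma>\<^sup>2"
  assumes \<sigma>: "\<sigma> > 0" and a: "a > 0"
  shows "(\<integral>\<^sup>+y. ennreal (exp (l * y\<^sup>2 + b * y) * normal_density 0 \<sigma> y) \<partial>lborel)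
      = ennreal (exp (b\<^sup>2 * \<sigma>\<^sup>2 / (2 * a)) / sqrt a)"
proof -
  define m where "m = b * \<sigma>\<^sup>2 / a"
  define s where "s = \<sigma> / sqrt a"
  define K where "K = exp (b\<^sup>2 * \<sigma>\<^sup>2 / (2 * a)) / sqrt a"
  have s2: "s\<^sup>2 = \<sigma>\<^sup>2 / a"
    using a by (simp add: s_def power_divide)
  \<comment> \<open>Completing the square: the integrand is a multiple of the density of \<open>N(m, s\<^sup>2)\<close>.\<close>
  have square: "l * y\<^sup>2 + b * y - y\<^sup>2 / (2 * \<sigma>\<^sup>2) = b\<^sup>2 * \<sigma>\<^sup>2 / (2 * a) - (y - m)\<^sup>2 / (2 * s\<^sup>2)" for y
  proof -
    have "l * y\<^sup>2 - y\<^sup>2 / (2 * \<sigma>\<^sup>2) = - a * y\<^sup>2 / (2 * \<sigma>\<^sup>2)"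
      using \<sigma> unfolding a_def by (simp add: field_simps)
    moreover have "b\<^sup>2 * \<sigma>\<^sup>2 / (2 * a) - (y - m)\<^sup>2 / (2 * s\<^sup>2) = - a * y\<^sup>2 / (2 * \<sigma>\<^sup>2) + b * y"
      using \<sigma> a unfolding s2 m_def by (simp add: field_simps power2_eq_square)
    ultimately show ?thesis by simp
  qed
  have scale: "1 / sqrt (2 * pi * \<sigma>\<^sup>2) = 1 / (sqrt a * sqrt (2 * pi * s\<^sup>2))"
    using \<sigma> a unfolding s2 by (simp add: real_sqrt_divide real_sqrt_mult)
  have "exp (l * y\<^sup>2 + b * y) * normal_density 0 \<sigma> y = K * normal_density m s y" for y
  proof -
    have "exp (l * y\<^sup>2 + b * y) * normal_density 0 \<sigma> y
        = 1 / sqrt (2 * pi * \<sigma>\<^sup>2) * exp (l * y\<^sup>2 + b * y - y\<^sup>2 / (2 * \<sigma>\<^sup>2))"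
      unfolding normal_density_def exp_diff by (simp add: exp_minus field_simps)
    also have "\<dots> = K * normal_density m s y"
      unfolding square scale normal_density_def K_def exp_diff by (simp add: exp_minus field_simps)
    finally show ?thesis .
  qed
  moreover have "K \<ge> 0"
    using a by (simp add: K_def)
  ultimately have "(\<integral>\<^sup>+y. ennreal (exp (l * y\<^sup>2 + b * y) * normal_density 0 \<sigma> y) \<partial>lborel)
      = (\<integral>\<^sup>+y. ennreal K * ennreal (normal_density m s y) \<partial>lborel)"
    by (simp add: ennreal_mult)
  also have "\<dots> = ennreal K * (\<integral>\<^sup>+y. ennreal (normal_density m s y) \<partial>lborel)"
    by (rule nn_integral_cmult) simp
  also have "\<dots> = ennreal K"
    using \<sigma> a by (subst nn_integral_eq_integral) (auto simp: s_def)
  finally show ?thesis unfolding K_def .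
qed

definition iso_gauss :: "real \<Rightarrow> 'a::euclidean_space measure" where
  "iso_gauss \<sigma> = density lborel (\<lambda>v. ennreal (\<Prod>e\<in>Basis. normal_density 0 \<sigma> (v \<bullet> e)))"

lemma space_iso_gauss[simp]: "space (iso_gauss \<sigma>) = UNIV"
  and sets_iso_gauss[measurable_cong, simp]: "sets (iso_gauss \<sigma>) = sets borel"
  by (simp_all add: iso_gauss_def)

lemma iso_gauss_density_eq_prod_Basis:
  fixes v :: "real ^ 'd"
  shows "iso_gauss_density \<sigma> v = (\<Prod>e\<in>Basis. normal_density 0 \<sigma> (v \<bullet> e))"
proof -
  have Basis: "(Basis :: (real ^ 'd) set) = range (\<lambda>i. axis i 1)"
    by (auto simp: Basis_vec_def)
  have "inj (\<lambda>i::'d. axis i (1::real))"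
    by (auto simp: inj_def axis_eq_axis)
  then show ?thesis
    unfolding iso_gauss_density_def Basis by (simp add: prod.reindex inner_axis)
qed

lemma distr_eq_iso_gauss:
  fixes X :: "'w \<Rightarrow> real ^ 'd"
  assumes "distributed M lborel X (\<lambda>v. ennreal (iso_gauss_density \<sigma> v))"
  shows "distr M borel X = iso_gauss \<sigma>"
proof -
  have "distr M borel X = distr M lborel X"
    by (rule distr_cong) simp_all
  also have "\<dots> = iso_gauss \<sigma>"
    using distributed_distr_eq_density[OF assms]
    by (simp add: iso_gauss_def iso_gauss_density_eq_prod_Basis)
  finally show ?thesis .
qed

lemma nn_integral_exp_quadratic_iso_gauss:
  fixes b :: "'a::euclidean_space" and \<sigma> l :: real
  defines "a \<equiv> 1 - 2 * l * \<sigma>\<^sup>2"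
  assumes \<sigma>: "\<sigma> > 0" and a: "a > 0"
  shows "(\<integral>\<^sup>+y. ennreal (exp (l * (norm y)\<^sup>2 + b \<bullet> y)) \<partial>iso_gauss \<sigma>)
      = ennreal (exp (\<sigma>\<^sup>2 * (norm b)\<^sup>2 / (2 * a)) / sqrt a ^ DIM('a))"
proof -
  define f where "f e t = exp (l * t\<^sup>2 + (b \<bullet> e) * t) * normal_density 0 \<sigma> t" for e t
  have sq_norm: "(norm z)\<^sup>2 = (\<Sum>e\<in>Basis. (z \<bullet> e)\<^sup>2)" for z :: 'a
    unfolding power2_norm_eq_inner by (subst euclidean_inner) (simp add: power2_eq_square)
  have split: "(\<Prod>e\<in>Basis. normal_density 0 \<sigma> (y \<bullet> e)) * exp (l * (norm y)\<^sup>2 + b \<bullet> y)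
      = (\<Prod>e\<in>Basis. f e (y \<bullet> e))" for y
    unfolding sq_norm euclidean_inner[of b y] f_def
    by (simp add: sum_distrib_left sum.distrib[symmetric] exp_sum prod.distrib algebra_simps)
  have "(\<integral>\<^sup>+y. ennreal (exp (l * (norm y)\<^sup>2 + b \<bullet> y)) \<partial>iso_gauss \<sigma>)
      = (\<integral>\<^sup>+y. (\<Prod>e\<in>Basis. ennreal (f e (y \<bullet> e))) \<partial>lborel)"
    unfolding iso_gauss_def
    by (subst nn_integral_density)
       (auto simp: ennreal_mult'[symmetric] prod_nonneg split prod_ennreal f_def intro!: nn_integral_cong)
  also have "\<dots> = (\<Prod>e\<in>Basis. (\<integral>\<^sup>+t. ennreal (f e t) \<partial>lborel))"
    by (rule nn_integral_lborel_prod) (auto simp: f_def)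
  also have "\<dots> = (\<Prod>e\<in>Basis. ennreal (exp ((b \<bullet> e)\<^sup>2 * \<sigma>\<^sup>2 / (2 * a)) / sqrt a))"
    unfolding f_def a_def using \<sigma> a[unfolded a_def] by (simp add: nn_integral_exp_quadratic_normal_density)
  also have "\<dots> = ennreal (exp (\<sigma>\<^sup>2 * (norm b)\<^sup>2 / (2 * a)) / sqrt a ^ DIM('a))"
    using a unfolding sq_norm
    by (simp add: prod_ennreal prod_dividef exp_sum[symmetric] sum_distrib_left sum_divide_distrib mult.commute)
  finally show ?thesis .
qed

lemma prob_space_iso_gauss:
  assumes "\<sigma> > 0"
  shows "prob_space (iso_gauss \<sigma> :: 'a::euclidean_space measure)"
proof
  have "(\<integral>\<^sup>+y. ennreal (exp (0 * (norm y)\<^sup>2 + 0 \<bullet> y)) \<partial>(iso_gauss \<sigma> :: 'a measure)) = 1"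
    using nn_integral_exp_quadratic_iso_gauss[OF assms, of 0 0] by simp
  then show "emeasure (iso_gauss \<sigma>) (space (iso_gauss \<sigma> :: 'a measure)) = 1"
    by simp
qed

lemma inverse_sqrt_le_exp:
  fixes a :: real
  assumes "a > 0"
  shows "1 / sqrt a \<le> exp ((1 - a) / (2 * a))"
proof -
  have "(exp ((1 - a) / (2 * a)))\<^sup>2 = exp (1 / a - 1)"
    using assms by (simp add: power2_eq_square exp_add[symmetric] field_simps)
  moreover have "1 / a \<le> exp (1 / a - 1)"
    using exp_ge_add_one_self[of "1 / a - 1"] by simp
  ultimately have "sqrt (1 / a) \<le> sqrt ((exp ((1 - a) / (2 * a)))\<^sup>2)"
    by (simp add: real_sqrt_le_mono)
  then show ?thesis
    by (simp add: real_sqrt_divide)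
qed

lemma nn_integral_exp_quadratic_iso_gauss_le:
  fixes v :: "'a::euclidean_space" and \<sigma> l :: real
  assumes \<sigma>: "\<sigma> > 0" and a: "2 * l * \<sigma>\<^sup>2 < 1"
  shows "(\<integral>\<^sup>+y. ennreal (exp (l * ((norm y)\<^sup>2 + 2 * (v \<bullet> y)))) \<partial>iso_gauss \<sigma>)
      \<le> ennreal (exp (l * \<sigma>\<^sup>2 * (2 * l * (norm v)\<^sup>2 + DIM('a)) / (1 - 2 * l * \<sigma>\<^sup>2)))"
proof -
  define a where "a = 1 - 2 * l * \<sigma>\<^sup>2"
  have a0: "a > 0"
    using a by (simp add: a_def)
  have "l * ((norm y)\<^sup>2 + 2 * (v \<bullet> y)) = l * (norm y)\<^sup>2 + (2 * l) *\<^sub>R v \<bullet> y" for y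
    by (simp add: algebra_simps)
  then have "(\<integral>\<^sup>+y. ennreal (exp (l * ((norm y)\<^sup>2 + 2 * (v \<bullet> y)))) \<partial>iso_gauss \<sigma>)
      = ennreal (exp (\<sigma>\<^sup>2 * (norm ((2 * l) *\<^sub>R v))\<^sup>2 / (2 * a)) / sqrt a ^ DIM('a))"
    using nn_integral_exp_quadratic_iso_gauss[OF \<sigma>, of l "(2 * l) *\<^sub>R v"] a0 by (simp add: a_def)
  also have "\<dots> \<le> ennreal (exp (2 * l\<^sup>2 * \<sigma>\<^sup>2 * (norm v)\<^sup>2 / a) * exp ((1 - a) / (2 * a)) ^ DIM('a))"
  proof -
    have "\<sigma>\<^sup>2 * (norm ((2 * l) *\<^sub>R v))\<^sup>2 / (2 * a) = 2 * l\<^sup>2 * \<sigma>\<^sup>2 * (norm v)\<^sup>2 / a"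
      by (simp add: power_mult_distrib field_simps)
    moreover have "1 / sqrt a ^ DIM('a) \<le> exp ((1 - a) / (2 * a)) ^ DIM('a)"
      using power_mono[OF inverse_sqrt_le_exp[OF a0], of "DIM('a)"] a0 by (simp add: power_one_over)
    then have "exp (2 * l\<^sup>2 * \<sigma>\<^sup>2 * (norm v)\<^sup>2 / a) / sqrt a ^ DIM('a)
        \<le> exp (2 * l\<^sup>2 * \<sigma>\<^sup>2 * (norm v)\<^sup>2 / a) * exp ((1 - a) / (2 * a)) ^ DIM('a)"
      using mult_left_mono[of _ _ "exp (2 * l\<^sup>2 * \<sigma>\<^sup>2 * (norm v)\<^sup>2 / a)"] by fastforce
    ultimately show ?thesis
      by (intro ennreal_leI) simp
  qed
  also have "\<dots> = ennreal (exp (l * \<sigma>\<^sup>2 * (2 * l * (norm v)\<^sup>2 + DIM('a)) / a))"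
  proof -
    have "1 - a = 2 * (l * \<sigma>\<^sup>2)"
      by (simp add: a_def)
    then have "(1 - a) / (2 * a) = l * \<sigma>\<^sup>2 / a"
      by simp
    then have "2 * l\<^sup>2 * \<sigma>\<^sup>2 * (norm v)\<^sup>2 / a + DIM('a) * ((1 - a) / (2 * a))
        = l * \<sigma>\<^sup>2 * (2 * l * (norm v)\<^sup>2 + DIM('a)) / a"
      by (simp add: add_divide_distrib power2_eq_square algebra_simps)
    then show ?thesis
      by (simp add: exp_of_nat_mult[symmetric] exp_add[symmetric])
  qed
  finally show ?thesis unfolding a_def .
qed

section \<open>Integrating against an independent random variable\<close>

lemma (in prob_space) distr_Pair_eq_pair_measure_if_indep_set:
  assumes indep: "indep_set (sets (vimage_algebra (space M) Y Q)) (sets (vimage_algebra (space M) H P))"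
    and Y: "Y \<in> M \<rightarrow>\<^sub>M Q" and H: "H \<in> M \<rightarrow>\<^sub>M P"
  shows "distr M Q Y \<Otimes>\<^sub>M distr M P H = distr M (Q \<Otimes>\<^sub>M P) (\<lambda>\<omega>. (Y \<omega>, H \<omega>))"
proof (rule pair_measure_eqI)
  interpret Y: prob_space "distr M Q Y"
    using Y by (rule prob_space_distr)
  interpret H: prob_space "distr M P H"
    using H by (rule prob_space_distr)
  show "sigma_finite_measure (distr M Q Y)" "sigma_finite_measure (distr M P H)" ..
  fix A B
  assume A: "A \<in> sets (distr M Q Y)" and B: "B \<in> sets (distr M P H)"
  have "(\<lambda>\<omega>. (Y \<omega>, H \<omega>)) -` (A \<times> B) \<inter> space M = (Y -` A \<inter> space M) \<inter> (H -` B \<inter> space M)"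
    by auto
  moreover have "prob ((Y -` A \<inter> space M) \<inter> (H -` B \<inter> space M))
      = prob (Y -` A \<inter> space M) * prob (H -` B \<inter> space M)"
    using A B by (intro indep_setD[OF indep] in_vimage_algebra) simp_all
  ultimately show "emeasure (distr M Q Y) A * emeasure (distr M P H) B
      = emeasure (distr M (Q \<Otimes>\<^sub>M P) (\<lambda>\<omega>. (Y \<omega>, H \<omega>))) (A \<times> B)"
    using A B Y H
    by (simp add: emeasure_distr measurable_Pair emeasure_eq_measure ennreal_mult[symmetric])
qed simp

lemma (in prob_space) nn_integral_indep_set:
  assumes indep: "indep_set (sets (vimage_algebra (space M) Y Q)) (sets (vimage_algebra (space M) H P))"
    and Y: "Y \<in> M \<rightarrow>\<^sub>M Q" and H: "H \<in> M \<rightarrow>\<^sub>M P"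
    and F: "F \<in> borel_measurable (Q \<Otimes>\<^sub>M P)"
  shows "(\<integral>\<^sup>+\<omega>. F (Y \<omega>, H \<omega>) \<partial>M) = (\<integral>\<^sup>+\<omega>. (\<integral>\<^sup>+y. F (y, H \<omega>) \<partial>distr M Q Y) \<partial>M)"
proof -
  note joint = distr_Pair_eq_pair_measure_if_indep_set[OF indep Y H]
  interpret Y: prob_space "distr M Q Y"
    using Y by (rule prob_space_distr)
  interpret H: prob_space "distr M P H"
    using H by (rule prob_space_distr)
  interpret pair_sigma_finite "distr M Q Y" "distr M P H" ..
  have "sets (distr M Q Y \<Otimes>\<^sub>M distr M P H) = sets (Q \<Otimes>\<^sub>M P)"
    by (intro sets_pair_measure_cong) simp_all
  then have F': "F \<in> borel_measurable (distr M Q Y \<Otimes>\<^sub>M distr M P H)"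
    using F by (simp cong: measurable_cong_sets)
  have "(\<integral>\<^sup>+\<omega>. F (Y \<omega>, H \<omega>) \<partial>M) = (\<integral>\<^sup>+z. F z \<partial>distr M (Q \<Otimes>\<^sub>M P) (\<lambda>\<omega>. (Y \<omega>, H \<omega>)))"
    using Y H F by (simp add: nn_integral_distr)
  also have "\<dots> = (\<integral>\<^sup>+g. (\<integral>\<^sup>+y. F (y, g) \<partial>distr M Q Y) \<partial>distr M P H)"
    unfolding joint[symmetric] by (rule nn_integral_snd[OF F', symmetric])
  also have "\<dots> = (\<integral>\<^sup>+\<omega>. (\<integral>\<^sup>+y. F (y, H \<omega>) \<partial>distr M Q Y) \<partial>M)"
  proof (rule nn_integral_distr[OF H])
    have "(\<lambda>(g, y). F (y, g)) \<in> borel_measurable (distr M P H \<Otimes>\<^sub>M distr M Q Y)"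
      using measurable_pair_swap[OF F'] by simp
    then show "(\<lambda>g. \<integral>\<^sup>+y. F (y, g) \<partial>distr M Q Y) \<in> borel_measurable (distr M P H)"
      by (rule Y.borel_measurable_nn_integral)
  qed
  finally show ?thesis .
qed

section \<open>The walk and its exponential supermartingale\<close>

text \<open>Indexed from 1 as in the paper: \<open>walk_of_noise U 1 h = 0\<close>; the value at 0 is junk.\<close>
fun walk_of_noise :: "(nat \<Rightarrow> (nat \<Rightarrow> 'v::real_vector) \<Rightarrow> 'v) \<Rightarrow> nat \<Rightarrow> (nat \<Rightarrow> 'v) \<Rightarrow> 'v" where
  "walk_of_noise U 0 h = 0"
| "walk_of_noise U (Suc n) h =
    (if n = 0 then 0 else walk_of_noise U n h + U n (restrict h {1..<n}) + h n)"

lemma walk_of_noise_restrict: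
  "q \<le> s \<Longrightarrow> walk_of_noise U q (restrict h {1..<s}) = walk_of_noise U q h"
  by (induction q) (auto simp: min_absorb2)

lemma borel_measurable_walk_of_noise:
  fixes U :: "nat \<Rightarrow> (nat \<Rightarrow> 'v::euclidean_space) \<Rightarrow> 'v"
  assumes U: "\<And>n. 1 \<le> n \<Longrightarrow> n < s \<Longrightarrow> U n \<in> borel_measurable (PiM {1..<n} (\<lambda>_. borel))"
  shows "q \<le> s \<Longrightarrow> (\<lambda>h. walk_of_noise U q h) \<in> borel_measurable (PiM {1..<s} (\<lambda>_. borel))"
proof (induction q)
  case 0
  have "walk_of_noise U 0 = (\<lambda>_. 0)"
    by auto
  then show ?case
    by simp
next
  case (Suc n)
  show ?case
  proof (cases "n = 0")
    case True
    then have "walk_of_noise U (Suc n) = (\<lambda>_. 0)"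
      by auto
    then show ?thesis
      by simp
  next
    case False
    then have n: "1 \<le> n" "n < s"
      using Suc.prems by auto
    have "(\<lambda>h. U n (restrict h {1..<n})) \<in> borel_measurable (PiM {1..<s} (\<lambda>_. borel))"
      using n by (intro measurable_compose[OF measurable_restrict_subset U]) auto
    moreover have "(\<lambda>h. h n) \<in> borel_measurable (PiM {1..<s} (\<lambda>_. borel))"
      using n by (intro measurable_component_singleton) auto
    ultimately have "(\<lambda>h. walk_of_noise U n h + U n (restrict h {1..<n}) + h n)
        \<in> borel_measurable (PiM {1..<s} (\<lambda>_. borel))"
      using Suc by (intro borel_measurable_add) auto
    then show ?thesis
      using False by simp
  qed
qed

locale gaussian_driven_walk = prob_space M
  for M :: "'w measure"
    and \<eta> :: "nat \<Rightarrow> 'w \<Rightarrow> real ^ 'd"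
    and U :: "nat \<Rightarrow> (nat \<Rightarrow> real ^ 'd) \<Rightarrow> real ^ 'd"
    and u x :: "nat \<Rightarrow> 'w \<Rightarrow> real ^ 'd"
    and T :: nat and \<sigma> :: real +
  assumes sigma_pos: "\<sigma> > 0"
    and gauss: "\<And>t. 1 \<le> t \<Longrightarrow> t < T \<Longrightarrow>
        distributed M lborel (\<eta> t) (\<lambda>v. ennreal (iso_gauss_density \<sigma> v))"
    and indep: "\<And>t. 1 \<le> t \<Longrightarrow> t < T \<Longrightarrow>
        indep_set
          (sets (vimage_algebra (space M) (\<eta> t) borel))
          (sets (vimage_algebra (space M) (\<lambda>\<omega>. \<lambda>i\<in>{1..<t}. \<eta> i \<omega>)
                  (PiM {1..<t} (\<lambda>_. borel))))"
    and U_meas: "\<And>t. 1 \<le> t \<Longrightarrow> t < T \<Longrightarrow> U t \<in> PiM {1..<t} (\<lambda>_. borel) \<rightarrow>\<^sub>M borel"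
    and u_def: "\<And>t \<omega>. 1 \<le> t \<Longrightarrow> t < T \<Longrightarrow> \<omega> \<in> space M \<Longrightarrow>
        u t \<omega> = U t (\<lambda>i\<in>{1..<t}. \<eta> i \<omega>)"
    and x_init: "\<And>\<omega>. \<omega> \<in> space M \<Longrightarrow> x 1 \<omega> = 0"
    and x_step: "\<And>t \<omega>. 1 \<le> t \<Longrightarrow> t < T \<Longrightarrow> \<omega> \<in> space M \<Longrightarrow>
        x (t + 1) \<omega> = x t \<omega> + u t \<omega> + \<eta> t \<omega>"
    and u_norm: "\<And>t \<omega>. 1 \<le> t \<Longrightarrow> t < T \<Longrightarrow> \<omega> \<in> space M \<Longrightarrow> norm (u t \<omega>) \<le> 1"
    and u_inner: "\<And>t \<omega>. 1 \<le> t \<Longrightarrow> t < T \<Longrightarrow> \<omega> \<in> space M \<Longrightarrow>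
        inner (x t \<omega>) (u t \<omega>) \<le> 0"
begin

definition noise :: "'w \<Rightarrow> nat \<Rightarrow> real ^ 'd" where
  "noise \<omega> = (\<lambda>i. \<eta> i \<omega>)"

lemma borel_measurable_eta: "1 \<le> t \<Longrightarrow> t < T \<Longrightarrow> \<eta> t \<in> borel_measurable M"
  using distributed_measurable[OF gauss] by simp

lemma distr_eta: "1 \<le> t \<Longrightarrow> t < T \<Longrightarrow> distr M borel (\<eta> t) = iso_gauss \<sigma>"
  using gauss by (rule distr_eq_iso_gauss)

lemma measurable_history:
  "s \<le> T \<Longrightarrow> (\<lambda>\<omega>. restrict (noise \<omega>) {1..<s}) \<in> M \<rightarrow>\<^sub>M PiM {1..<s} (\<lambda>_. borel)"
  unfolding noise_def by (intro measurable_restrict) (auto intro: borel_measurable_eta)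

lemma x_eq_walk_of_noise:
  assumes "\<omega> \<in> space M" "1 \<le> t" "t \<le> T"
  shows "x t \<omega> = walk_of_noise U t (noise \<omega>)"
  using assms(2,3)
proof (induction t rule: dec_induct)
  case base
  then show ?case
    using x_init[OF assms(1)] by simp
next
  case (step n)
  then show ?case
    using x_step[of n \<omega>] u_def[of n \<omega>] assms(1) by (simp add: noise_def)
qed

lemma borel_measurable_x:
  assumes "1 \<le> t" "t \<le> T"
  shows "x t \<in> borel_measurable M"
proof -
  have "(\<lambda>\<omega>. walk_of_noise U t (restrict (noise \<omega>) {1..<T})) \<in> borel_measurable M"
    using measurable_history[OF order.refl] borel_measurable_walk_of_noise[OF U_meas assms(2)]
    by (rule measurable_compose) simp
  moreover have "x t \<omega> = walk_of_noise U t (restrict (noise \<omega>) {1..<T})" if "\<omega> \<in> space M" for \<omega>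
    unfolding walk_of_noise_restrict[OF assms(2)] by (rule x_eq_walk_of_noise[OF that assms])
  ultimately show ?thesis
    by (simp cong: measurable_cong)
qed

lemma norm_x_sq_le:
  assumes \<omega>: "\<omega> \<in> space M" and "1 \<le> t" "t \<le> T"
  shows "(norm (x t \<omega>))\<^sup>2
    \<le> real (t - 1) + (\<Sum>r\<in>{1..<t}. (norm (\<eta> r \<omega>))\<^sup>2 + 2 * ((x r \<omega> + u r \<omega>) \<bullet> \<eta> r \<omega>))"
  using assms(2,3)
proof (induction t rule: dec_induct)
  case base
  then show ?case
    using x_init[OF \<omega>] by simp
next
  case (step t)
  then have t: "1 \<le> t" "t < T"
    by auto
  have "(norm (x (Suc t) \<omega>))\<^sup>2 = (norm (x t \<omega>))\<^sup>2 + (norm (u t \<omega>))\<^sup>2 + 2 * (x t \<omega> \<bullet> u t \<omega>)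
      + ((norm (\<eta> t \<omega>))\<^sup>2 + 2 * ((x t \<omega> + u t \<omega>) \<bullet> \<eta> t \<omega>))"
    using x_step[OF t \<omega>]
    by (simp add: power2_norm_eq_inner inner_add_left inner_add_right inner_commute algebra_simps)
  also have "\<dots> \<le> (norm (x t \<omega>))\<^sup>2 + 1 + ((norm (\<eta> t \<omega>))\<^sup>2 + 2 * ((x t \<omega> + u t \<omega>) \<bullet> \<eta> t \<omega>))"
    using power_le_one[OF norm_ge_zero u_norm[OF t \<omega>], of 2] u_inner[OF t \<omega>] by simp
  finally show ?case
    using step.IH t by (simp add: atLeastLessThanSuc)
qed

definition first_exit :: "nat \<Rightarrow> 'w set" where
  "first_exit t = {\<omega> \<in> space M.
    (\<forall>q\<in>{1..<t}. norm (x q \<omega>) \<le> 10 * sqrt q) \<and> 10 * sqrt t < norm (x t \<omega>)}"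

lemma sets_bounded_until:
  "{\<omega> \<in> space M. \<forall>q\<in>{1..t}. norm (x q \<omega>) \<le> 10 * sqrt q} \<in> sets M" if "t \<le> T"
proof -
  have "{\<omega> \<in> space M. norm (x q \<omega>) \<le> 10 * sqrt q} \<in> sets M" if "q \<in> {1..t}" for q
  proof -
    have [measurable]: "x q \<in> borel_measurable M"
      using that \<open>t \<le> T\<close> by (intro borel_measurable_x) auto
    show ?thesis
      by measurable
  qed
  then show ?thesis
    by (rule sets.sets_Collect_finite_All[OF _ finite_atLeastAtMost])
qed

lemma not_bounded_subset_first_exits:
  "{\<omega> \<in> space M. \<not> (\<forall>t\<in>{1..T}. norm (x t \<omega>) \<le> 10 * sqrt t)} \<subseteq> (\<Union>t\<in>{2..T}. first_exit t)"
proof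
  fix \<omega>
  assume "\<omega> \<in> {\<omega> \<in> space M. \<not> (\<forall>t\<in>{1..T}. norm (x t \<omega>) \<le> 10 * sqrt t)}"
  then have \<omega>: "\<omega> \<in> space M" and "\<exists>t. t \<in> {1..T} \<and> 10 * sqrt t < norm (x t \<omega>)"
    by auto
  then obtain t where t: "t \<in> {1..T}" "10 * sqrt t < norm (x t \<omega>)"
    and least: "\<And>q. q < t \<Longrightarrow> \<not> (q \<in> {1..T} \<and> 10 * sqrt q < norm (x q \<omega>))"
    unfolding exists_least_iff[of "\<lambda>t. t \<in> {1..T} \<and> 10 * sqrt t < norm (x t \<omega>)"] by blast
  have "t \<noteq> 1"
    using t x_init[OF \<omega>] by auto
  with t least \<omega> show "\<omega> \<in> (\<Union>t\<in>{2..T}. first_exit t)"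
    unfolding first_exit_def by (auto intro!: bexI[of _ t] simp: not_less)
qed

lemma sets_first_exit: "1 \<le> t \<Longrightarrow> t \<le> T \<Longrightarrow> first_exit t \<in> sets M"
proof -
  assume t: "1 \<le> t" "t \<le> T"
  have "first_exit t = {\<omega> \<in> space M. \<forall>q\<in>{1..t - 1}. norm (x q \<omega>) \<le> 10 * sqrt q}
      \<inter> {\<omega> \<in> space M. 10 * sqrt t < norm (x t \<omega>)}"
    using t by (auto simp: first_exit_def)
  moreover have [measurable]: "x t \<in> borel_measurable M"
    using t by (rule borel_measurable_x)
  ultimately show ?thesis
    using sets_bounded_until[of "t - 1"] t by simp
qed

definition bounded_upto :: "(nat \<Rightarrow> real ^ 'd) \<Rightarrow> nat \<Rightarrow> bool" where
  "bounded_upto h r \<longleftrightarrow> (\<forall>q\<in>{1..r}. norm (walk_of_noise U q h) \<le> 10 * sqrt q)"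

definition drifted :: "(nat \<Rightarrow> real ^ 'd) \<Rightarrow> nat \<Rightarrow> real ^ 'd" where
  "drifted h r = walk_of_noise U r h + U r (restrict h {1..<r})"

text \<open>Along a sample path, \<open>increment l c r\<close> is at least \<open>l (\<parallel>x (r + 1)\<parallel>\<^sup>2 - \<parallel>x r\<parallel>\<^sup>2 - 1) - c\<close>
  (\<open>norm_x_sq_le\<close>) while the path has stayed in the region, and it is frozen at 0 afterwards. The
  freezing keeps the drift small, which is what makes every factor \<open>exp (increment l c r \<dots>)\<close> of
  \<open>supermartingale\<close> have conditional expectation at most 1.\<close>
definition increment :: "real \<Rightarrow> real \<Rightarrow> nat \<Rightarrow> (nat \<Rightarrow> real ^ 'd) \<Rightarrow> real ^ 'd \<Rightarrow> real" where
  "increment l c r g y =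
    (if bounded_upto g r then l * ((norm y)\<^sup>2 + 2 * (drifted g r \<bullet> y)) - c else 0)"

definition supermartingale :: "real \<Rightarrow> real \<Rightarrow> nat \<Rightarrow> (nat \<Rightarrow> real ^ 'd) \<Rightarrow> real" where
  "supermartingale l c s h = exp (\<Sum>r\<in>{1..<s}. increment l c r (restrict h {1..<r}) (h r))"

lemma bounded_upto_restrict:
  assumes "r \<le> s"
  shows "bounded_upto (restrict h {1..<s}) r = bounded_upto h r"
proof -
  have "walk_of_noise U q (restrict h {1..<s}) = walk_of_noise U q h" if "q \<in> {1..r}" for q
    using that assms by (intro walk_of_noise_restrict) auto
  then show ?thesis
    by (simp add: bounded_upto_def)
qed

lemma supermartingale_restrict:
  "supermartingale l c s (restrict h {1..<s}) = supermartingale l c s h"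
  unfolding supermartingale_def by (intro arg_cong[where f = exp] sum.cong) (auto simp: min_absorb2)

lemma supermartingale_Suc:
  "1 \<le> n \<Longrightarrow> supermartingale l c (Suc n) h
    = supermartingale l c n h * exp (increment l c n (restrict h {1..<n}) (h n))"
  by (simp add: supermartingale_def atLeastLessThanSuc exp_add)

lemma borel_measurable_walk:
  assumes "q \<le> s" "s \<le> T"
  shows "(\<lambda>h. walk_of_noise U q h) \<in> borel_measurable (PiM {1..<s} (\<lambda>_. borel))"
proof (rule borel_measurable_walk_of_noise[OF _ assms(1)])
  fix n
  assume "1 \<le> n" "n < s"
  then show "U n \<in> borel_measurable (PiM {1..<n} (\<lambda>_. borel))"
    using assms(2) by (intro U_meas) auto
qed

lemma measurable_bounded_upto:
  assumes "r \<le> s" "s \<le> T"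
  shows "(\<lambda>g. bounded_upto g r) \<in> measurable (PiM {1..<s} (\<lambda>_. borel)) (count_space UNIV)"
  unfolding bounded_upto_def
proof (intro pred_intros_finite(3))
  fix q
  assume "q \<in> {1..r}"
  then have [measurable]: "(\<lambda>h. walk_of_noise U q h) \<in> borel_measurable (PiM {1..<s} (\<lambda>_. borel))"
    using assms by (intro borel_measurable_walk) auto
  show "Measurable.pred (PiM {1..<s} (\<lambda>_. borel)) (\<lambda>g. norm (walk_of_noise U q g) \<le> 10 * sqrt q)"
    by measurable
qed simp

lemma borel_measurable_drifted:
  assumes "1 \<le> r" "r < T"
  shows "(\<lambda>g. drifted g r) \<in> borel_measurable (PiM {1..<r} (\<lambda>_. borel))"
proof -
  have "(\<lambda>g. U r (restrict g {1..<r})) \<in> borel_measurable (PiM {1..<r} (\<lambda>_. borel))"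
    using assms by (intro measurable_compose[OF measurable_restrict_subset U_meas]) auto
  then show ?thesis
    unfolding drifted_def using assms by (intro borel_measurable_add borel_measurable_walk) auto
qed

lemma measurable_increment:
  assumes "1 \<le> r" "r < T"
  shows "(\<lambda>(y, g). increment l c r g y) \<in> borel_measurable (borel \<Otimes>\<^sub>M PiM {1..<r} (\<lambda>_. borel))"
proof -
  note [measurable] =
    measurable_bounded_upto[OF order.refl less_imp_le[OF assms(2)]] borel_measurable_drifted[OF assms]
  show ?thesis
    unfolding increment_def using assms by measurable
qed

lemma borel_measurable_supermartingale:
  assumes "s \<le> T"
  shows "supermartingale l c s \<in> borel_measurable (PiM {1..<s} (\<lambda>_. borel))"
proof -
  have "(\<lambda>h. increment l c r (restrict h {1..<r}) (h r)) \<in> borel_measurable (PiM {1..<s} (\<lambda>_. borel))"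
    if "r \<in> {1..<s}" for r
  proof -
    have "(\<lambda>h. (h r, restrict h {1..<r})) \<in> PiM {1..<s} (\<lambda>_. borel) \<rightarrow>\<^sub>M borel \<Otimes>\<^sub>M PiM {1..<r} (\<lambda>_. borel)"
      using that by (intro measurable_Pair measurable_component_singleton measurable_restrict_subset) auto
    from measurable_compose[OF this measurable_increment] show ?thesis
      using that assms by simp
  qed
  then show ?thesis
    unfolding supermartingale_def by measurable
qed

lemma bounded_upto_history_iff:
  assumes "\<omega> \<in> space M" "r \<le> T"
  shows "bounded_upto (restrict (noise \<omega>) {1..<r}) r \<longleftrightarrow> (\<forall>q\<in>{1..r}. norm (x q \<omega>) \<le> 10 * sqrt q)"
  unfolding bounded_upto_restrict[OF order.refl] unfolding bounded_upto_def
  using assms by (auto simp: x_eq_walk_of_noise)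

lemma drifted_history:
  assumes "\<omega> \<in> space M" "1 \<le> r" "r < T"
  shows "drifted (restrict (noise \<omega>) {1..<r}) r = x r \<omega> + u r \<omega>"
proof -
  have "walk_of_noise U r (restrict (noise \<omega>) {1..<r}) = x r \<omega>"
    unfolding walk_of_noise_restrict[OF order.refl] using x_eq_walk_of_noise[OF assms(1,2)] assms(3) by simp
  moreover have "U r (restrict (restrict (noise \<omega>) {1..<r}) {1..<r}) = u r \<omega>"
    using u_def[OF assms(2,3,1)] by (simp add: noise_def)
  ultimately show ?thesis
    by (simp add: drifted_def)
qed

lemma nn_integral_exp_increment_le_1:
  assumes mgf: "\<And>v :: real ^ 'd. norm v \<le> 11 * sqrt t \<Longrightarrow>
      (\<integral>\<^sup>+y. ennreal (exp (l * ((norm y)\<^sup>2 + 2 * (v \<bullet> y)))) \<partial>iso_gauss \<sigma>) \<le> ennreal (exp c)"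
    and \<omega>: "\<omega> \<in> space M" and n: "1 \<le> n" "n < t" "t \<le> T"
  shows "(\<integral>\<^sup>+y. ennreal (exp (increment l c n (restrict (noise \<omega>) {1..<n}) y)) \<partial>iso_gauss \<sigma>) \<le> 1"
proof (cases "bounded_upto (restrict (noise \<omega>) {1..<n}) n")
  case True
  define v where "v = drifted (restrict (noise \<omega>) {1..<n}) n"
  have "norm v \<le> norm (x n \<omega>) + norm (u n \<omega>)"
    using drifted_history[OF \<omega> n(1)] n by (simp add: v_def norm_triangle_ineq)
  also have "\<dots> \<le> 10 * sqrt n + 1"
    using True n u_norm[OF n(1) _ \<omega>] bounded_upto_history_iff[OF \<omega>, of n] by force
  also have "\<dots> \<le> 11 * sqrt t"
  proof -
    have "sqrt n \<le> sqrt t" "1 \<le> sqrt t"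
      using n by simp_all
    then show ?thesis
      by linarith
  qed
  finally have "norm v \<le> 11 * sqrt t" .
  then have "(\<integral>\<^sup>+y. ennreal (exp (increment l c n (restrict (noise \<omega>) {1..<n}) y)) \<partial>iso_gauss \<sigma>)
      = ennreal (exp (- c)) * (\<integral>\<^sup>+y. ennreal (exp (l * ((norm y)\<^sup>2 + 2 * (v \<bullet> y)))) \<partial>iso_gauss \<sigma>)"
    using True unfolding increment_def v_def[symmetric]
    by (subst nn_integral_cmult[symmetric]) (auto simp: ennreal_mult[symmetric] exp_add[symmetric])
  also have "\<dots> \<le> ennreal (exp (- c)) * ennreal (exp c)"
    using mgf[OF \<open>norm v \<le> 11 * sqrt t\<close>] by (rule mult_left_mono) simp
  also have "\<dots> = 1"
    by (simp add: ennreal_mult[symmetric] exp_add[symmetric])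
  finally show ?thesis .
next
  case False
  then show ?thesis
    using prob_space.emeasure_space_1[OF prob_space_iso_gauss[OF sigma_pos, where 'a = "real ^ 'd"]]
    by (simp add: increment_def)
qed

lemma borel_measurable_increment:
  assumes "1 \<le> n" "n < T" "g \<in> space (PiM {1..<n} (\<lambda>_. borel))"
  shows "(\<lambda>y. increment l c n g y) \<in> borel_measurable borel"
  using measurable_compose[OF measurable_Pair2'[OF assms(3)] measurable_increment[OF assms(1,2)]]
  by simp

lemma nn_integral_supermartingale_step_le:
  assumes mgf: "\<And>v :: real ^ 'd. norm v \<le> 11 * sqrt t \<Longrightarrow>
      (\<integral>\<^sup>+y. ennreal (exp (l * ((norm y)\<^sup>2 + 2 * (v \<bullet> y)))) \<partial>iso_gauss \<sigma>) \<le> ennreal (exp c)"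
    and \<omega>: "\<omega> \<in> space M" and n: "1 \<le> n" "n < t" "t \<le> T"
    and g: "g = restrict (noise \<omega>) {1..<n}"
  shows "(\<integral>\<^sup>+y. ennreal (supermartingale l c n g * exp (increment l c n g y)) \<partial>iso_gauss \<sigma>)
    \<le> ennreal (supermartingale l c n g)"
proof -
  have "g \<in> space (PiM {1..<n} (\<lambda>_. borel))"
    unfolding g using measurable_space[OF measurable_history \<omega>] n by simp
  then have "(\<integral>\<^sup>+y. ennreal (supermartingale l c n g * exp (increment l c n g y)) \<partial>iso_gauss \<sigma>)
      = ennreal (supermartingale l c n g) * (\<integral>\<^sup>+y. ennreal (exp (increment l c n g y)) \<partial>iso_gauss \<sigma>)"
    using borel_measurable_increment[OF n(1) _ ] n
    by (subst nn_integral_cmult[symmetric]) (auto simp: ennreal_mult supermartingale_def)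
  also have "\<dots> \<le> ennreal (supermartingale l c n g) * 1"
    unfolding g using n \<omega> by (intro mult_left_mono nn_integral_exp_increment_le_1[OF mgf]) auto
  finally show ?thesis
    by simp
qed

lemma nn_integral_supermartingale_le_1:
  assumes mgf: "\<And>v :: real ^ 'd. norm v \<le> 11 * sqrt t \<Longrightarrow>
      (\<integral>\<^sup>+y. ennreal (exp (l * ((norm y)\<^sup>2 + 2 * (v \<bullet> y)))) \<partial>iso_gauss \<sigma>) \<le> ennreal (exp c)"
    and s: "1 \<le> s" "s \<le> t" and "t \<le> T"
  shows "(\<integral>\<^sup>+\<omega>. ennreal (supermartingale l c s (noise \<omega>)) \<partial>M) \<le> 1"
  using s
proof (induction s rule: dec_induct)
  case base
  then show ?case
    by (simp add: supermartingale_def emeasure_space_1)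
next
  case (step n)
  then have n: "1 \<le> n" "n < t" "n < T"
    using \<open>t \<le> T\<close> by auto
  define H where "H = (\<lambda>\<omega>. restrict (noise \<omega>) {1..<n})"
  define F where "F = (\<lambda>(y, g). ennreal (supermartingale l c n g * exp (increment l c n g y)))"
  have H: "H \<in> M \<rightarrow>\<^sub>M PiM {1..<n} (\<lambda>_. borel)"
    unfolding H_def using n by (intro measurable_history) simp
  have F: "F \<in> borel_measurable (borel \<Otimes>\<^sub>M PiM {1..<n} (\<lambda>_. borel))"
  proof -
    note [measurable] = borel_measurable_supermartingale[OF less_imp_le[OF n(3)]]
      measurable_increment[OF n(1,3)]
    show ?thesis
      unfolding F_def by measurable
  qed
  have "supermartingale l c (Suc n) (noise \<omega>)
      = supermartingale l c n (H \<omega>) * exp (increment l c n (H \<omega>) (\<eta> n \<omega>))" for \<omega>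
    unfolding H_def supermartingale_Suc[OF n(1)] supermartingale_restrict by (simp add: noise_def)
  then have "(\<integral>\<^sup>+\<omega>. ennreal (supermartingale l c (Suc n) (noise \<omega>)) \<partial>M) = (\<integral>\<^sup>+\<omega>. F (\<eta> n \<omega>, H \<omega>) \<partial>M)"
    by (simp add: F_def)
  also have "\<dots> = (\<integral>\<^sup>+\<omega>. (\<integral>\<^sup>+y. F (y, H \<omega>) \<partial>distr M borel (\<eta> n)) \<partial>M)"
  proof (rule nn_integral_indep_set[OF _ borel_measurable_eta[OF n(1,3)] H F])
    show "indep_set (sets (vimage_algebra (space M) (\<eta> n) borel))
        (sets (vimage_algebra (space M) H (PiM {1..<n} (\<lambda>_. borel))))"
      unfolding H_def noise_def by (rule indep[OF n(1,3)])
  qed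
  also have "\<dots> \<le> (\<integral>\<^sup>+\<omega>. ennreal (supermartingale l c n (H \<omega>)) \<partial>M)"
  proof (rule nn_integral_mono)
    fix \<omega>
    assume "\<omega> \<in> space M"
    moreover have "H \<omega> = restrict (noise \<omega>) {1..<n}"
      by (simp add: H_def)
    ultimately show "(\<integral>\<^sup>+y. F (y, H \<omega>) \<partial>distr M borel (\<eta> n)) \<le> ennreal (supermartingale l c n (H \<omega>))"
      unfolding F_def distr_eta[OF n(1,3)] prod.case
      using nn_integral_supermartingale_step_le[OF mgf _ n(1,2) \<open>t \<le> T\<close>] by blast
  qed
  also have "\<dots> = (\<integral>\<^sup>+\<omega>. ennreal (supermartingale l c n (noise \<omega>)) \<partial>M)"
    unfolding H_def supermartingale_restrict ..
  also have "\<dots> \<le> 1"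
    using step.IH n by simp
  finally show ?case .
qed

lemma supermartingale_ge_on_first_exit:
  assumes \<omega>: "\<omega> \<in> first_exit t" and t: "2 \<le> t" "t \<le> T"
    and l: "0 \<le> l" "l * t = \<theta>" and c: "0 \<le> c" "t * c \<le> 98 * \<theta>"
  shows "exp \<theta> \<le> supermartingale l c t (noise \<omega>)"
proof -
  have \<omega>_space: "\<omega> \<in> space M"
    and inside: "\<forall>q\<in>{1..<t}. norm (x q \<omega>) \<le> 10 * sqrt q"
    and exit: "10 * sqrt t < norm (x t \<omega>)"
    using \<omega> by (auto simp: first_exit_def)
  define S where "S = (\<Sum>r\<in>{1..<t}. (norm (\<eta> r \<omega>))\<^sup>2 + 2 * ((x r \<omega> + u r \<omega>) \<bullet> \<eta> r \<omega>))"
  have "increment l c r (restrict (noise \<omega>) {1..<r}) (noise \<omega> r)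
      = l * ((norm (\<eta> r \<omega>))\<^sup>2 + 2 * ((x r \<omega> + u r \<omega>) \<bullet> \<eta> r \<omega>)) - c" if r: "r \<in> {1..<t}" for r
  proof -
    have "bounded_upto (restrict (noise \<omega>) {1..<r}) r"
      using bounded_upto_history_iff[OF \<omega>_space, of r] inside r t by auto
    then show ?thesis
      using drifted_history[OF \<omega>_space, of r] r t by (simp add: increment_def noise_def)
  qed
  then have sum_eq: "(\<Sum>r\<in>{1..<t}. increment l c r (restrict (noise \<omega>) {1..<r}) (noise \<omega> r))
      = l * S - (t - 1) * c"
    by (simp add: S_def sum_subtractf sum_distrib_left)
  have "(10 * sqrt t)\<^sup>2 < (norm (x t \<omega>))\<^sup>2"
    using exit by (intro power_strict_mono) auto
  then have "100 * t < (norm (x t \<omega>))\<^sup>2"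
    by (simp add: power_mult_distrib)
  then have "99 * t \<le> S"
    using norm_x_sq_le[OF \<omega>_space, of t] t by (simp add: S_def)
  then have "99 * \<theta> \<le> l * S"
    using l mult_left_mono[of "99 * t" S l] by (simp add: algebra_simps)
  moreover have "(t - 1) * c \<le> 98 * \<theta>"
    using c t mult_right_mono[of "real t - 1" t c] by simp
  ultimately have "\<theta> \<le> (\<Sum>r\<in>{1..<t}. increment l c r (restrict (noise \<omega>) {1..<r}) (noise \<omega> r))"
    unfolding sum_eq by simp
  then show ?thesis
    unfolding supermartingale_def by simp
qed

lemma prob_first_exit_le_of_mgf:
  assumes mgf: "\<And>v :: real ^ 'd. norm v \<le> 11 * sqrt t \<Longrightarrow>
      (\<integral>\<^sup>+y. ennreal (exp (l * ((norm y)\<^sup>2 + 2 * (v \<bullet> y)))) \<partial>iso_gauss \<sigma>) \<le> ennreal (exp c)"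
    and t: "2 \<le> t" "t \<le> T" and l: "0 \<le> l" "l * t = \<theta>" and c: "0 \<le> c" "t * c \<le> 98 * \<theta>"
  shows "prob (first_exit t) \<le> exp (- \<theta>)"
proof -
  have [measurable]: "first_exit t \<in> sets M"
    using t by (intro sets_first_exit) auto
  have "ennreal (exp \<theta>) * emeasure M (first_exit t)
      = (\<integral>\<^sup>+\<omega>. ennreal (exp \<theta>) * indicator (first_exit t) \<omega> \<partial>M)"
    by (simp add: nn_integral_cmult_indicator)
  also have "\<dots> \<le> (\<integral>\<^sup>+\<omega>. ennreal (supermartingale l c t (noise \<omega>)) \<partial>M)"
    using supermartingale_ge_on_first_exit[OF _ t l c]
    by (intro nn_integral_mono) (auto split: split_indicator intro: ennreal_leI)
  also have "\<dots> \<le> 1"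
    using t mgf by (intro nn_integral_supermartingale_le_1) auto
  finally have "exp \<theta> * prob (first_exit t) \<le> 1"
    by (simp add: emeasure_eq_measure ennreal_mult[symmetric])
  then show ?thesis
    by (simp add: exp_minus field_simps)
qed

lemma prob_first_exit_le:
  assumes t: "2 \<le> t" "t \<le> T"
    and \<theta>: "1 \<le> \<theta>" "8 * \<sigma>\<^sup>2 * \<theta> \<le> 1" "5 * \<sigma>\<^sup>2 * CARD('d) * \<theta>\<^sup>2 \<le> 1"
  shows "prob (first_exit t) \<le> exp (- \<theta>)"
proof -
  define l where "l = \<theta> / t"
  define a where "a = 1 - 2 * l * \<sigma>\<^sup>2"
  define c where "c = l * \<sigma>\<^sup>2 * (242 * l * t + CARD('d)) / a"
  have l: "0 \<le> l" "l * t = \<theta>" "l \<le> \<theta>"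
    using t \<theta> by (auto simp: l_def field_simps)
  have "l * \<sigma>\<^sup>2 \<le> \<theta> * \<sigma>\<^sup>2"
    using l(3) by (rule mult_right_mono) simp
  then have "2 * l * \<sigma>\<^sup>2 \<le> 1 / 4"
    using \<theta>(2) by (simp add: algebra_simps)
  then have a: "3 / 4 \<le> a"
    by (simp add: a_def)
  have c: "0 \<le> c"
    using l a by (simp add: c_def)
  have mgf: "(\<integral>\<^sup>+y. ennreal (exp (l * ((norm y)\<^sup>2 + 2 * (v \<bullet> y)))) \<partial>iso_gauss \<sigma>) \<le> ennreal (exp c)"
    if "norm v \<le> 11 * sqrt t" for v :: "real ^ 'd"
  proof -
    have "(norm v)\<^sup>2 \<le> (11 * sqrt t)\<^sup>2"
      using that by (intro power_mono) simp_all
    then have "2 * l * (norm v)\<^sup>2 \<le> 242 * l * t"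
      using mult_left_mono[of "(norm v)\<^sup>2" "(11 * sqrt t)\<^sup>2" "2 * l"] l(1)
      by (simp add: power_mult_distrib)
    then have "l * \<sigma>\<^sup>2 * (2 * l * (norm v)\<^sup>2 + DIM(real ^ 'd)) / a \<le> c"
      using l a unfolding c_def by (intro divide_right_mono mult_left_mono) simp_all
    moreover have "2 * l * \<sigma>\<^sup>2 < 1"
      using a by (simp add: a_def)
    ultimately show ?thesis
      using nn_integral_exp_quadratic_iso_gauss_le[OF sigma_pos, of l v]
      by (auto simp: a_def intro: order_trans)
  qed
  have tc: "t * c \<le> 98 * \<theta>"
  proof -
    have "1 \<le> \<theta>\<^sup>2"
      using \<theta>(1) by (rule one_le_power)
    then have "\<sigma>\<^sup>2 * CARD('d) \<le> \<sigma>\<^sup>2 * CARD('d) * \<theta>\<^sup>2"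
      using mult_left_mono[of 1 "\<theta>\<^sup>2" "\<sigma>\<^sup>2 * CARD('d)"] by simp
    then have "\<sigma>\<^sup>2 * CARD('d) \<le> 1 / 5"
      using \<theta>(3) by (simp add: mult.assoc)
    moreover have "\<sigma>\<^sup>2 * \<theta> \<le> 1 / 8"
      using \<theta>(2) by (simp add: mult.assoc)
    moreover have "\<sigma>\<^sup>2 * (242 * \<theta> + CARD('d)) = 242 * (\<sigma>\<^sup>2 * \<theta>) + \<sigma>\<^sup>2 * CARD('d)"
      by (simp add: algebra_simps)
    ultimately have "\<sigma>\<^sup>2 * (242 * \<theta> + CARD('d)) \<le> 73 / 2"
      by linarith
    then have "\<sigma>\<^sup>2 * (242 * \<theta> + CARD('d)) / a \<le> 98"
      using a by (simp add: divide_le_eq)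
    moreover have "t * c = \<theta> * (\<sigma>\<^sup>2 * (242 * \<theta> + CARD('d)) / a)"
      unfolding c_def l(2)[symmetric] by (simp add: ac_simps)
    ultimately show ?thesis
      using mult_left_mono[of "\<sigma>\<^sup>2 * (242 * \<theta> + CARD('d)) / a" 98 \<theta>] \<theta>(1) by simp
  qed
  show ?thesis
    using prob_first_exit_le_of_mgf[OF mgf t l(1,2) c tc] .
qed

lemma prob_bounded_walk_ge:
  assumes "1 \<le> \<theta>" "8 * \<sigma>\<^sup>2 * \<theta> \<le> 1" "5 * \<sigma>\<^sup>2 * CARD('d) * \<theta>\<^sup>2 \<le> 1"
  shows "1 - T * exp (- \<theta>) \<le> prob {\<omega> \<in> space M. \<forall>t\<in>{1..T}. norm (x t \<omega>) \<le> 10 * sqrt t}"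
proof -
  let ?B = "{\<omega> \<in> space M. \<forall>t\<in>{1..T}. norm (x t \<omega>) \<le> 10 * sqrt t}"
  have "prob (space M - ?B) \<le> prob (\<Union>t\<in>{2..T}. first_exit t)"
    using not_bounded_subset_first_exits sets_first_exit
    by (intro finite_measure_mono) auto
  also have "\<dots> \<le> (\<Sum>t\<in>{2..T}. prob (first_exit t))"
    using sets_first_exit by (intro finite_measure_subadditive_finite) auto
  also have "\<dots> \<le> (\<Sum>t\<in>{2..T}. exp (- \<theta>))"
    using prob_first_exit_le assms by (intro sum_mono) auto
  also have "\<dots> \<le> T * exp (- \<theta>)"
    by (simp add: mult_right_mono)
  finally show ?thesis
    using prob_compl[OF sets_bounded_until[OF order.refl]] by (simp add: Diff_eq Int_commute)
qed

end

theorem claim3p11: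
  fixes M :: "'w measure"
    and \<eta> :: "nat \<Rightarrow> 'w \<Rightarrow> real ^ 'd"
    and U :: "nat \<Rightarrow> (nat \<Rightarrow> real ^ 'd) \<Rightarrow> real ^ 'd"
    and u x :: "nat \<Rightarrow> 'w \<Rightarrow> real ^ 'd"
    and T \<tau> :: nat and \<beta> \<sigma> L :: real
  assumes "prob_space M"
    and "T \<ge> 1" and "\<tau> \<ge> 1"
    and "0 < \<beta>" and "\<beta> < 1"
    and L_def: "L = 2 * real T * real \<tau> / \<beta>"
    and "L \<ge> exp 1"
    and "\<sigma> > 0"
    and "\<sigma> * sqrt (2 * ln L) \<le> 1/2"
    and "5 * \<sigma>\<^sup>2 * real CARD('d) * ln L \<le> 1 / ln L"
    and gauss: "\<And>t. 1 \<le> t \<Longrightarrow> t < T \<Longrightarrow>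
        distributed M lborel (\<eta> t) (\<lambda>v. ennreal (iso_gauss_density \<sigma> v))"
    and indep: "\<And>t. 1 \<le> t \<Longrightarrow> t < T \<Longrightarrow>
        prob_space.indep_set M
          (sets (vimage_algebra (space M) (\<eta> t) borel))
          (sets (vimage_algebra (space M) (\<lambda>\<omega>. \<lambda>i\<in>{1..<t}. \<eta> i \<omega>)
                  (PiM {1..<t} (\<lambda>_. borel))))"
    and U_meas: "\<And>t. 1 \<le> t \<Longrightarrow> t < T \<Longrightarrow>
        U t \<in> PiM {1..<t} (\<lambda>_. borel) \<rightarrow>\<^sub>M borel"
    and u_def: "\<And>t \<omega>. 1 \<le> t \<Longrightarrow> t < T \<Longrightarrow> \<omega> \<in> space M \<Longrightarrow>
        u t \<omega> = U t (\<lambda>i\<in>{1..<t}. \<eta> i \<omega>)"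
    and x_init: "\<And>\<omega>. \<omega> \<in> space M \<Longrightarrow> x 1 \<omega> = 0"
    and x_step: "\<And>t \<omega>. 1 \<le> t \<Longrightarrow> t < T \<Longrightarrow> \<omega> \<in> space M \<Longrightarrow>
        x (t + 1) \<omega> = x t \<omega> + u t \<omega> + \<eta> t \<omega>"
    and u_norm: "\<And>t \<omega>. 1 \<le> t \<Longrightarrow> t < T \<Longrightarrow> \<omega> \<in> space M \<Longrightarrow> norm (u t \<omega>) \<le> 1"
    and u_inner: "\<And>t \<omega>. 1 \<le> t \<Longrightarrow> t < T \<Longrightarrow> \<omega> \<in> space M \<Longrightarrow>
        inner (x t \<omega>) (u t \<omega>) \<le> 0"
  shows "measure M {\<omega> \<in> space M. \<forall>t\<in>{1..T}. norm (x t \<omega>) \<le> 10 * sqrt (real t)}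
           \<ge> 1 - 2 * \<beta> / real \<tau>"
proof -
  interpret gaussian_driven_walk M \<eta> U u x T \<sigma>
    using assms by (intro gaussian_driven_walk.intro gaussian_driven_walk_axioms.intro) auto
  have L: "0 < L"
    using \<open>L \<ge> exp 1\<close> exp_gt_zero[of 1] by linarith
  define \<theta> where "\<theta> = ln L"
  have \<theta>: "1 \<le> \<theta>" "\<sigma> * sqrt (2 * \<theta>) \<le> 1 / 2" "5 * \<sigma>\<^sup>2 * CARD('d) * \<theta> \<le> 1 / \<theta>"
    using L \<open>L \<ge> exp 1\<close> \<open>\<sigma> * sqrt (2 * ln L) \<le> 1/2\<close> \<open>5 * \<sigma>\<^sup>2 * real CARD('d) * ln L \<le> 1 / ln L\<close>
    by (simp_all add: \<theta>_def ln_ge_iff)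
  have "\<sigma>\<^sup>2 * (2 * \<theta>) = (\<sigma> * sqrt (2 * \<theta>))\<^sup>2"
    using \<theta>(1) by (simp add: power_mult_distrib)
  also have "\<dots> \<le> (1 / 2)\<^sup>2"
    using \<theta> \<open>\<sigma> > 0\<close> by (intro power_mono mult_nonneg_nonneg) auto
  finally have \<sigma>_\<theta>: "8 * \<sigma>\<^sup>2 * \<theta> \<le> 1"
    by (simp add: power2_eq_square)
  have "5 * \<sigma>\<^sup>2 * CARD('d) * \<theta> * \<theta> \<le> 1 / \<theta> * \<theta>"
    using \<theta> by (intro mult_right_mono) simp_all
  then have \<sigma>_dim: "5 * \<sigma>\<^sup>2 * CARD('d) * \<theta>\<^sup>2 \<le> 1"
    using \<theta>(1) by (simp add: power2_eq_square mult.assoc)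
  have "1 - T * exp (- \<theta>) \<le> measure M {\<omega> \<in> space M. \<forall>t\<in>{1..T}. norm (x t \<omega>) \<le> 10 * sqrt t}"
    by (rule prob_bounded_walk_ge[OF \<theta>(1) \<sigma>_\<theta> \<sigma>_dim])
  moreover have "T * exp (- \<theta>) \<le> 2 * \<beta> / \<tau>"
    using L \<open>0 < \<beta>\<close> \<open>\<tau> \<ge> 1\<close> unfolding \<theta>_def L_def by (simp add: exp_minus field_simps)
  ultimately show ?thesis
    by linarith
qed

end
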